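(* Let $X$ be a finite set, $f:2^X\to\mathbb{R}_{\ge0}$ a normalized monotone submodular function, $k\ge2$ and $n\ge k$ integers with $n\le|X|$, and $S^*\in\arg\max_{S\subseteq X,\,|S|\le n}f(S)$. Let $S=S_n=\{x_1,\dots,x_n\}$ be produced by the $k$-wise optimistic algorithm ($S_0=\emptyset$, $x_i\in\arg\max_{x\in X\setminus S_{i-1}}\bar f_k(x\mid S_{i-1})$, $S_i=S_{i-1}\cup\{x_i\}$), and assume $\bar f_k(x_i\mid S_{i-1})>0$ for $k<i\le n$. Then \[ f(S)\ \ge\ \left(1-e^{-\frac{1}{n}\left(k+\sum_{i=k+1}^n \frac{f(x_i\mid S_{i-1})}{\bar f_k(x_i\mid S_{i-1})}\right)}\right) f(S^* ), \] equivalently $f(S)\ge\left(1-e^{-\frac1n\left(k+\sum_{i=k+1}^n(1-c_k(x_i\mid S_{i-1}))\right)}\right)f(S^* )$.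
   Context: $f(x\mid A):=f(A\cup\{x\})-f(A)$. $k$-wise upper estimate: $\bar f_k(x\mid S):=\min_{A\subseteq S,\,|A|<k} f(x\mid A)$. The $k$-marginal curvature of $f$ at $x\in X\setminus S$ given $S$ is $c_k(x\mid S)=1-\max_{A\subseteq S,|A|<k} f(x\mid S)/f(x\mid A)=1-f(x\mid S)/\bar f_k(x\mid S)$. *)

theory Defs
  imports Complex_Main
begin

definition marg :: "('a set \<Rightarrow> real) \<Rightarrow> 'a \<Rightarrow> 'a set \<Rightarrow> real" where
  "marg f x A = f (A \<union> {x}) - f A"

text \<open>k-wise upper estimate: minimum of f(x | A) over A \<subseteq> S with |A| < k
  (S is finite in all uses, so this is a Min over a finite nonempty set for k \<ge> 1).\<close>
definition fbar :: "nat \<Rightarrow> ('a set \<Rightarrow> real) \<Rightarrow> 'a \<Rightarrow> 'a set \<Rightarrow> real" where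
  "fbar k f x S = Min {marg f x A | A. A \<subseteq> S \<and> card A < k}"

definition normalized :: "('a set \<Rightarrow> real) \<Rightarrow> bool" where
  "normalized f \<longleftrightarrow> f {} = 0"

definition nonneg_on :: "'a set \<Rightarrow> ('a set \<Rightarrow> real) \<Rightarrow> bool" where
  "nonneg_on X f \<longleftrightarrow> (\<forall>A. A \<subseteq> X \<longrightarrow> 0 \<le> f A)"

definition monotone_set_fun :: "'a set \<Rightarrow> ('a set \<Rightarrow> real) \<Rightarrow> bool" where
  "monotone_set_fun X f \<longleftrightarrow> (\<forall>A B. A \<subseteq> B \<and> B \<subseteq> X \<longrightarrow> f A \<le> f B)"

definition submodular :: "'a set \<Rightarrow> ('a set \<Rightarrow> real) \<Rightarrow> bool" where
  "submodular X f \<longleftrightarrow>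
     (\<forall>A B. A \<subseteq> X \<and> B \<subseteq> X \<longrightarrow> f (A \<union> B) + f (A \<inter> B) \<le> f A + f B)"

definition prefix_set :: "(nat \<Rightarrow> 'a) \<Rightarrow> nat \<Rightarrow> 'a set" where
  "prefix_set xs i = xs ` {1..i}"

definition kwise_optimistic :: "'a set \<Rightarrow> ('a set \<Rightarrow> real) \<Rightarrow> nat \<Rightarrow> nat \<Rightarrow> (nat \<Rightarrow> 'a) \<Rightarrow> bool" where
  "kwise_optimistic X f k n xs \<longleftrightarrow>
     (\<forall>i\<in>{1..n}. xs i \<in> X - prefix_set xs (i - 1) \<and>
        (\<forall>y\<in>X - prefix_set xs (i - 1).
            fbar k f y (prefix_set xs (i - 1)) \<le> fbar k f (xs i) (prefix_set xs (i - 1))))"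

end

theory Submission
  imports Defs
begin

text \<open>The classical greedy argument with the greedy gain replaced by the optimistic estimate.
  Let g_i = f(S*) - f(S_i). Submodularity and the optimistic choice of x_i give
  g_{i-1} \<le> \<Sum>_{y \<in> S*} f(y | S_{i-1}) \<le> n \<cdot> fbar_k(x_i | S_{i-1}), while the realised gain is
  f(x_i | S_{i-1}) = r_i \<cdot> fbar_k(x_i | S_{i-1}) with r_i = 1 for i \<le> k, because the estimate is
  exact as long as |S_{i-1}| < k. Hence g_i \<le> (1 - r_i/n) g_{i-1} \<le> exp(-r_i/n) g_{i-1}.\<close>

lemma le_exp_sum_of_recurrence:
  fixes d a :: "nat \<Rightarrow> real"
  assumes "d 0 \<le> c" "0 \<le> c"
    and "\<And>i. i \<in> {1..m} \<Longrightarrow> a i \<le> 1 \<and> d i \<le> (1 - a i) * d (i - 1)"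
  shows "d m \<le> exp (- (\<Sum>i=1..m. a i)) * c"
  using assms(3)
proof (induction m)
  case 0
  then show ?case using assms(1) by simp
next
  case (Suc m)
  have a: "a (Suc m) \<le> 1" and d: "d (Suc m) \<le> (1 - a (Suc m)) * d m"
    using Suc.prems[of "Suc m"] by auto
  have "d (Suc m) \<le> (1 - a (Suc m)) * (exp (- (\<Sum>i=1..m. a i)) * c)"
    using d Suc a by (meson atLeastAtMost_iff diff_ge_0_iff_ge le_SucI mult_left_mono order_trans)
  also have "\<dots> \<le> exp (- a (Suc m)) * (exp (- (\<Sum>i=1..m. a i)) * c)"
    using exp_ge_add_one_self[of "- a (Suc m)"] assms(2) by (intro mult_right_mono) auto
  also have "\<dots> = exp (- (\<Sum>i=1..Suc m. a i)) * c"
    by (simp add: exp_add[symmetric] mult.assoc[symmetric] add.commute)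
  finally show ?case .
qed

lemma prefix_set_0 [simp]: "prefix_set xs 0 = {}"
  unfolding prefix_set_def by simp

lemma prefix_set_Suc: "prefix_set xs (Suc i) = insert (xs (Suc i)) (prefix_set xs i)"
  unfolding prefix_set_def by (simp add: atLeastAtMostSuc_conv)

lemma finite_prefix_set [simp]: "finite (prefix_set xs i)"
  unfolding prefix_set_def by simp

lemma card_prefix_set_le: "card (prefix_set xs i) \<le> i"
  unfolding prefix_set_def using card_image_le[of "{1..i}" xs] by simp

lemma finite_fbar_values: "finite S \<Longrightarrow> finite {marg f x A | A. A \<subseteq> S \<and> card A < k}"
  by (rule finite_subset[of _ "(\<lambda>A. marg f x A) ` Pow S"]) auto

lemma fbar_attained:
  assumes "finite S" "1 \<le> k"
  obtains A where "A \<subseteq> S" "card A < k" "fbar k f x S = marg f x A"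
proof -
  have "{marg f x A | A. A \<subseteq> S \<and> card A < k} \<noteq> {}"
    using assms(2) by (auto intro!: exI[of _ "{}"])
  then have "fbar k f x S \<in> {marg f x A | A. A \<subseteq> S \<and> card A < k}"
    unfolding fbar_def using Min_in[OF finite_fbar_values[OF assms(1)]] by blast
  then show thesis using that by blast
qed

lemma fbar_le_marg: "finite S \<Longrightarrow> A \<subseteq> S \<Longrightarrow> card A < k \<Longrightarrow> fbar k f x S \<le> marg f x A"
  unfolding fbar_def by (intro Min_le finite_fbar_values) auto

text \<open>The ratio r_i = 1 - c_k(x_i | S_{i-1}); it is set to 1 for i \<le> k, where fbar_k(x_i | S_{i-1})
  may vanish.\<close>
definition optimism_ratio :: "nat \<Rightarrow> ('a set \<Rightarrow> real) \<Rightarrow> (nat \<Rightarrow> 'a) \<Rightarrow> nat \<Rightarrow> real" where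
  "optimism_ratio k f xs i =
     (if i \<le> k then 1
      else marg f (xs i) (prefix_set xs (i - 1)) / fbar k f (xs i) (prefix_set xs (i - 1)))"

lemma sum_optimism_ratio:
  assumes "k \<le> n"
  shows "(\<Sum>i=1..n. optimism_ratio k f xs i) = real k + (\<Sum>i = k+1..n.
           marg f (xs i) (prefix_set xs (i - 1)) / fbar k f (xs i) (prefix_set xs (i - 1)))"
proof -
  have "{1..n} = {1..k} \<union> {k+1..n}" "{1..k} \<inter> {k+1..n} = {}" using assms by auto
  then show ?thesis
    by (simp add: sum.union_disjoint optimism_ratio_def)
qed

locale monotone_submodular =
  fixes X :: "'a set" and f :: "'a set \<Rightarrow> real"
  assumes mono: "monotone_set_fun X f" and submod: "submodular X f"
begin

lemma marg_nonneg:
  assumes "A \<subseteq> X" "x \<in> X"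
  shows "0 \<le> marg f x A"
proof -
  have "f A \<le> f (A \<union> {x})"
    using mono assms unfolding monotone_set_fun_def by (meson Un_least Un_upper1 empty_subsetI insert_subset)
  then show ?thesis unfolding marg_def by simp
qed

lemma marg_antimono:
  assumes "A \<subseteq> B" "B \<subseteq> X" "x \<in> X"
  shows "marg f x B \<le> marg f x A"
proof (cases "x \<in> B")
  case True
  then have "marg f x B = 0" unfolding marg_def by (simp add: insert_absorb)
  then show ?thesis using marg_nonneg[of A x] assms by simp
next
  case False
  have "A \<union> {x} \<subseteq> X" using assms by simp
  then have "f ((A \<union> {x}) \<union> B) + f ((A \<union> {x}) \<inter> B) \<le> f (A \<union> {x}) + f B"
    using submod assms(2) unfolding submodular_def by blast
  moreover have "(A \<union> {x}) \<union> B = B \<union> {x}" "(A \<union> {x}) \<inter> B = A"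
    using assms False by auto
  ultimately show ?thesis unfolding marg_def by simp
qed

lemma marg_le_fbar:
  assumes "finite S" "S \<subseteq> X" "x \<in> X" "1 \<le> k"
  shows "marg f x S \<le> fbar k f x S"
proof -
  obtain A where "A \<subseteq> S" "fbar k f x S = marg f x A"
    using fbar_attained[OF assms(1,4)] by metis
  then show ?thesis using marg_antimono[of A S x] assms by simp
qed

lemma fbar_eq_marg:
  assumes "finite S" "S \<subseteq> X" "x \<in> X" "card S < k"
  shows "fbar k f x S = marg f x S"
proof (rule antisym)
  show "fbar k f x S \<le> marg f x S" using fbar_le_marg[of S S k] assms by simp
  show "marg f x S \<le> fbar k f x S" using marg_le_fbar[of S x k] assms by simp
qed

lemma le_add_sum_marg:
  assumes "finite T" "T \<subseteq> X" "S \<subseteq> X"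
  shows "f (S \<union> T) \<le> f S + (\<Sum>y\<in>T. marg f y S)"
  using assms(1,2)
proof (induction T rule: finite_induct)
  case empty
  then show ?case by simp
next
  case (insert y T)
  have "f (S \<union> insert y T) = f (S \<union> T) + marg f y (S \<union> T)"
    unfolding marg_def by (simp add: insert_commute)
  also have "marg f y (S \<union> T) \<le> marg f y S"
    using marg_antimono[of S "S \<union> T" y] insert assms(3) by auto
  finally show ?case using insert by simp
qed

lemma kwise_optimistic_step:
  assumes "kwise_optimistic X f k n xs" "i \<in> {1..n}"
  shows "xs i \<in> X - prefix_set xs (i - 1)" and "prefix_set xs (i - 1) \<subseteq> X"
    and "\<And>y. y \<in> X - prefix_set xs (i - 1) \<Longrightarrow>
           fbar k f y (prefix_set xs (i - 1)) \<le> fbar k f (xs i) (prefix_set xs (i - 1))"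
proof -
  have run: "\<And>j. j \<in> {1..n} \<Longrightarrow> xs j \<in> X - prefix_set xs (j - 1)"
    using assms(1) unfolding kwise_optimistic_def by blast
  show "xs i \<in> X - prefix_set xs (i - 1)" by (rule run[OF assms(2)])
  show "prefix_set xs (i - 1) \<subseteq> X"
    unfolding prefix_set_def using run assms(2) by fastforce
  show "\<And>y. y \<in> X - prefix_set xs (i - 1) \<Longrightarrow>
          fbar k f y (prefix_set xs (i - 1)) \<le> fbar k f (xs i) (prefix_set xs (i - 1))"
    using assms unfolding kwise_optimistic_def by blast
qed

lemma kwise_optimistic_gap_le:
  assumes run: "kwise_optimistic X f k n xs" and i: "i \<in> {1..n}" and "1 \<le> k"
    and T: "finite T" "T \<subseteq> X" "card T \<le> n"
  shows "f T - f (prefix_set xs (i - 1)) \<le> n * fbar k f (xs i) (prefix_set xs (i - 1))"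
proof -
  let ?S = "prefix_set xs (i - 1)" and ?b = "fbar k f (xs i) (prefix_set xs (i - 1))"
  note step = kwise_optimistic_step[OF run i]
  have xi: "xs i \<in> X" using step(1) by simp
  have b_nonneg: "0 \<le> ?b"
    using marg_nonneg[OF step(2) xi] marg_le_fbar[OF finite_prefix_set step(2) xi \<open>1 \<le> k\<close>]
    by linarith
  have marg_le_b: "marg f y ?S \<le> ?b" if y: "y \<in> T" for y
  proof (cases "y \<in> ?S")
    case True
    then have "marg f y ?S = 0" unfolding marg_def by (simp add: insert_absorb)
    then show ?thesis using b_nonneg by simp
  next
    case False
    with y T(2) have y_new: "y \<in> X - ?S" by blast
    then have "marg f y ?S \<le> fbar k f y ?S"
      using marg_le_fbar[OF finite_prefix_set step(2) _ \<open>1 \<le> k\<close>] by blast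
    also have "\<dots> \<le> ?b" using step(3)[OF y_new] .
    finally show ?thesis .
  qed
  have "f T \<le> f (?S \<union> T)"
    using mono T(2) step(2) unfolding monotone_set_fun_def by (meson Un_least Un_upper2)
  also have "\<dots> \<le> f ?S + (\<Sum>y\<in>T. marg f y ?S)"
    by (rule le_add_sum_marg[OF T(1,2) step(2)])
  also have "(\<Sum>y\<in>T. marg f y ?S) \<le> card T * ?b"
    using sum_mono[of T "\<lambda>y. marg f y ?S" "\<lambda>_. ?b"] marg_le_b by simp
  also have "card T * ?b \<le> n * ?b"
    using T(3) b_nonneg by (intro mult_right_mono) auto
  finally show ?thesis by simp
qed

lemma optimism_ratio_bounds:
  assumes run: "kwise_optimistic X f k n xs" and i: "i \<in> {1..n}" and "1 \<le> k"
    and pos: "k < i \<Longrightarrow> fbar k f (xs i) (prefix_set xs (i - 1)) > 0"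
  shows "marg f (xs i) (prefix_set xs (i - 1)) =
           optimism_ratio k f xs i * fbar k f (xs i) (prefix_set xs (i - 1))"
    and "0 \<le> optimism_ratio k f xs i" and "optimism_ratio k f xs i \<le> 1"
proof -
  let ?S = "prefix_set xs (i - 1)"
  note step = kwise_optimistic_step[OF run i]
  have "0 \<le> marg f (xs i) ?S" "marg f (xs i) ?S \<le> fbar k f (xs i) ?S"
    using marg_nonneg marg_le_fbar step(1,2) \<open>1 \<le> k\<close> by auto
  moreover have "i \<le> k \<Longrightarrow> fbar k f (xs i) ?S = marg f (xs i) ?S"
    using fbar_eq_marg[of ?S "xs i" k] card_prefix_set_le[of xs "i - 1"] step(1,2) i by force
  ultimately show "marg f (xs i) ?S = optimism_ratio k f xs i * fbar k f (xs i) ?S"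
    and "0 \<le> optimism_ratio k f xs i" and "optimism_ratio k f xs i \<le> 1"
    using pos unfolding optimism_ratio_def by auto
qed

lemma kwise_optimistic_gap_recurrence:
  assumes run: "kwise_optimistic X f k n xs" and i: "i \<in> {1..n}" and "1 \<le> k"
    and pos: "k < i \<Longrightarrow> fbar k f (xs i) (prefix_set xs (i - 1)) > 0"
    and T: "finite T" "T \<subseteq> X" "card T \<le> n"
  shows "f T - f (prefix_set xs i) \<le>
           (1 - optimism_ratio k f xs i / n) * (f T - f (prefix_set xs (i - 1)))"
proof -
  let ?S = "prefix_set xs (i - 1)" and ?r = "optimism_ratio k f xs i"
  have S_i: "prefix_set xs i = ?S \<union> {xs i}"
    using prefix_set_Suc[of xs "i - 1"] i by simp
  have gain: "marg f (xs i) ?S = ?r * fbar k f (xs i) ?S" and "0 \<le> ?r"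
    using optimism_ratio_bounds[OF run i \<open>1 \<le> k\<close> pos] by auto
  have "?r * (f T - f ?S) \<le> ?r * (n * fbar k f (xs i) ?S)"
    using kwise_optimistic_gap_le[OF run i \<open>1 \<le> k\<close> T] \<open>0 \<le> ?r\<close> by (rule mult_left_mono)
  then have "?r / n * (f T - f ?S) \<le> marg f (xs i) ?S"
    using gain i by (simp add: field_simps)
  then show ?thesis
    using S_i by (simp add: marg_def algebra_simps)
qed

end

theorem corollary2:
  fixes X :: "'a set" and f :: "'a set \<Rightarrow> real" and k n :: nat
    and xs :: "nat \<Rightarrow> 'a" and Sstar :: "'a set"
  assumes "finite X"
    and "nonneg_on X f" and "normalized f" and "monotone_set_fun X f" and "submodular X f"
    and "2 \<le> k" and "k \<le> n" and "n \<le> card X"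
    and "Sstar \<subseteq> X" and "card Sstar \<le> n"
    and "\<forall>T. T \<subseteq> X \<and> card T \<le> n \<longrightarrow> f T \<le> f Sstar"
    and "kwise_optimistic X f k n xs"
    and "\<forall>i\<in>{k+1..n}. fbar k f (xs i) (prefix_set xs (i - 1)) > 0"
  shows "f (prefix_set xs n) \<ge>
    (1 - exp (- (1 / real n) * (real k + (\<Sum>i = k+1..n.
        marg f (xs i) (prefix_set xs (i - 1)) / fbar k f (xs i) (prefix_set xs (i - 1))))))
    * f Sstar"
proof -
  interpret monotone_submodular X f using assms(4,5) by unfold_locales
  let ?gap = "\<lambda>i. f Sstar - f (prefix_set xs i)" and ?a = "\<lambda>i. optimism_ratio k f xs i / n"
  have "?gap n \<le> exp (- (\<Sum>i=1..n. ?a i)) * f Sstar"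
  proof (rule le_exp_sum_of_recurrence)
    show "?gap 0 \<le> f Sstar" using assms(3) by (simp add: normalized_def)
    show "0 \<le> f Sstar" using assms(2,9) by (simp add: nonneg_on_def)
    fix i assume i: "i \<in> {1..n}"
    have pos: "k < i \<Longrightarrow> fbar k f (xs i) (prefix_set xs (i - 1)) > 0"
      using assms(13) i by auto
    show "?a i \<le> 1 \<and> ?gap i \<le> (1 - ?a i) * ?gap (i - 1)"
      using optimism_ratio_bounds(3)[OF assms(12) i _ pos] i assms(6)
        kwise_optimistic_gap_recurrence[OF assms(12) i _ pos finite_subset[OF assms(9,1)] assms(9,10)]
      by (auto simp: divide_le_eq_1)
  qed
  moreover have "(\<Sum>i=1..n. ?a i) = 1 / real n * (real k + (\<Sum>i = k+1..n.
        marg f (xs i) (prefix_set xs (i - 1)) / fbar k f (xs i) (prefix_set xs (i - 1))))"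
    using sum_optimism_ratio[OF assms(7), where f = f and xs = xs]
    by (simp add: sum_divide_distrib[symmetric])
  ultimately show ?thesis by (simp add: algebra_simps)
qed

end
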